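(* Let $H$ be a $3$-uniform hypergraph on $8$ vertices not containing a Fano plane. If $H$ contains the complete $3$-uniform hypergraph $K_6^{(3)}$ on $6$ vertices, then $e(H)\le 46<b(8)$, where $b(8)=48$.
   Context: $e(H)$ is the number of edges. "Containing" means having a (not necessarily induced) subhypergraph isomorphic to it. The Fano plane is the hypergraph on vertex set $\{1,\dots,7\}$ with edges $123,345,156,147,367,257,246$. $b(n)=\frac{n-2}{2}\lfloor n^2/4\rfloor$ is the number of edges of the balanced complete bipartite $3$-uniform hypergraph on $n$ vertices. *)

theory Defs
  imports Complex_Main
begin

definition uniform3 :: "'a set \<Rightarrow> 'a set set \<Rightarrow> bool" where
  "uniform3 V E \<longleftrightarrow> (\<forall>e\<in>E. e \<subseteq> V \<and> card e = 3)"

definition fano_edges :: "nat set set" where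
  "fano_edges = {{1,2,3},{3,4,5},{1,5,6},{1,4,7},{3,6,7},{2,5,7},{2,4,6}}"

definition contains_fano :: "'a set \<Rightarrow> 'a set set \<Rightarrow> bool" where
  "contains_fano V E \<longleftrightarrow>
     (\<exists>f. inj_on f {1..7} \<and> f ` {1..7} \<subseteq> V \<and> (\<forall>e\<in>fano_edges. f ` e \<in> E))"

definition contains_K6_3 :: "'a set \<Rightarrow> 'a set set \<Rightarrow> bool" where
  "contains_K6_3 V E \<longleftrightarrow>
     (\<exists>S. S \<subseteq> V \<and> card S = 6 \<and> (\<forall>e. e \<subseteq> S \<and> card e = 3 \<longrightarrow> e \<in> E))"

definition b :: "nat \<Rightarrow> real" where
  "b n = (real n - 2) / 2 * real (n^2 div 4)"

end

theory Submission
  imports Defs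
begin

(* Let S span the copy of K_6^(3) and let z be one of the two vertices outside S. If the link
   of z contained a perfect matching ab, cd, ef of S, then zab, zcd, zef together with four
   triangles inside S would form a Fano plane. Hence the pairs pq of S with zpq missing from E
   meet all 15 perfect matchings of K_6; since every pair lies in exactly 3 of them, there are
   at least 5 such pairs. The two outside vertices give 10 distinct missing triples, so
   e(H) <= C(8,3) - 10 = 46. *)

lemma sum_weights_ge_5_if_covers_perfect_matchings:
  fixes w :: "nat \<Rightarrow> nat \<Rightarrow> nat"
  assumes matching: "\<And>a1 a2 b1 b2 c1 c2. distinct [a1, a2, b1, b2, c1, c2]
      \<Longrightarrow> {a1, a2, b1, b2, c1, c2} \<subseteq> {..<6} \<Longrightarrow> 1 \<le> w a1 a2 + w b1 b2 + w c1 c2"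
  shows "5 \<le> (\<Sum>j<6. \<Sum>i<j. w i j)"
proof -
  have "(\<Sum>j<6. \<Sum>i<j. w i j) = w 0 1 + w 0 2 + w 1 2 + w 0 3 + w 1 3 + w 2 3
      + w 0 4 + w 1 4 + w 2 4 + w 3 4 + w 0 5 + w 1 5 + w 2 5 + w 3 5 + w 4 5"
    by (simp add: numeral_eq_Suc)
  moreover have "1 \<le> w 0 1 + w 2 3 + w 4 5" "1 \<le> w 0 1 + w 2 4 + w 3 5" "1 \<le> w 0 1 + w 2 5 + w 3 4"
    "1 \<le> w 0 2 + w 1 3 + w 4 5" "1 \<le> w 0 2 + w 1 4 + w 3 5" "1 \<le> w 0 2 + w 1 5 + w 3 4"
    "1 \<le> w 0 3 + w 1 2 + w 4 5" "1 \<le> w 0 3 + w 1 4 + w 2 5" "1 \<le> w 0 3 + w 1 5 + w 2 4"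
    "1 \<le> w 0 4 + w 1 2 + w 3 5" "1 \<le> w 0 4 + w 1 3 + w 2 5" "1 \<le> w 0 4 + w 1 5 + w 2 3"
    "1 \<le> w 0 5 + w 1 2 + w 3 4" "1 \<le> w 0 5 + w 1 3 + w 2 4" "1 \<le> w 0 5 + w 1 4 + w 2 3"
    by (rule matching; simp)+
  ultimately show ?thesis by linarith
qed

lemma card_ge_5_if_meets_perfect_matchings:
  assumes "finite M" and "card S = 6"
    and meets: "\<And>a1 a2 b1 b2 c1 c2. distinct [a1, a2, b1, b2, c1, c2]
      \<Longrightarrow> {a1, a2, b1, b2, c1, c2} \<subseteq> S \<Longrightarrow> {a1, a2} \<in> M \<or> {b1, b2} \<in> M \<or> {c1, c2} \<in> M"
  shows "5 \<le> card M"
proof -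
  have "finite S" using \<open>card S = 6\<close> by (intro card_ge_0_finite) simp
  then obtain g where g: "bij_betw g {..<6::nat} S"
    using ex_bij_betw_nat_finite \<open>card S = 6\<close> by (metis atLeast0LessThan)
  then have g_inj: "inj_on g {..<6}" and g_into: "g ` {..<6} \<subseteq> S"
    by (auto simp: bij_betw_def)
  define P where "P i j \<longleftrightarrow> {g i, g j} \<in> M" for i j
  have "5 \<le> (\<Sum>j<6. \<Sum>i<j. of_bool (P i j) :: nat)"
  proof (rule sum_weights_ge_5_if_covers_perfect_matchings)
    fix a1 a2 b1 b2 c1 c2 :: nat
    assume "distinct [a1, a2, b1, b2, c1, c2]" and below_6: "{a1, a2, b1, b2, c1, c2} \<subseteq> {..<6}"
    moreover have "inj_on g (set [a1, a2, b1, b2, c1, c2])"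
      using below_6 by (intro inj_on_subset[OF g_inj]) simp
    ultimately have "distinct (map g [a1, a2, b1, b2, c1, c2])"
      by (simp only: distinct_map)
    moreover have "{g a1, g a2, g b1, g b2, g c1, g c2} \<subseteq> S"
      using below_6 g_into by auto
    ultimately show "1 \<le> of_bool (P a1 a2) + of_bool (P b1 b2) + (of_bool (P c1 c2) :: nat)"
      using meets[of "g a1" "g a2" "g b1" "g b2" "g c1" "g c2"] by (auto simp: P_def)
  qed
  also have "\<dots> = card (SIGMA j:{..<6}. {..<j} \<inter> {i. P i j})"
    by simp
  also have "\<dots> \<le> card M"
  proof (rule card_inj_on_le[where f = "\<lambda>(j, i). {g i, g j}"])
    show "inj_on (\<lambda>(j, i). {g i, g j}) (SIGMA j:{..<6}. {..<j} \<inter> {i. P i j})"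
    proof (rule inj_onI, clarify)
      fix j i j' i'
      assume "j < 6" "i < j" "j' < 6" "i' < j'" "{g i, g j} = {g i', g j'}"
      then have "{i, j} = {i', j'}"
        using g_inj by (auto simp: doubleton_eq_iff inj_on_def)
      with \<open>i < j\<close> \<open>i' < j'\<close> show "j = j' \<and> i = i'"
        by (auto simp: doubleton_eq_iff)
    qed
  qed (use \<open>finite M\<close> in \<open>auto simp: P_def\<close>)
  finally show ?thesis .
qed

lemma contains_fano_if_link_has_perfect_matching:
  assumes "S \<subseteq> V" and clique: "\<And>t. t \<subseteq> S \<Longrightarrow> card t = 3 \<Longrightarrow> t \<in> E"
    and "z \<in> V" "z \<notin> S"
    and distinct: "distinct [a1, a2, b1, b2, c1, c2]" and in_S: "{a1, a2, b1, b2, c1, c2} \<subseteq> S"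
    and link: "{z, a1, a2} \<in> E" "{z, b1, b2} \<in> E" "{z, c1, c2} \<in> E"
  shows "contains_fano V E"
proof -
  \<comment> \<open>z plays the point 7, which lies on the lines 147, 367 and 257.\<close>
  define h where "h n = [a1, c1, b1, a2, c2, b2, z] ! (n - 1)" for n :: nat
  have points: "{1..7 :: nat} = {1, 2, 3, 4, 5, 6, 7}" by auto
  have triangle: "{p, q, r} \<in> E" if "{p, q, r} \<subseteq> S" "distinct [p, q, r]" for p q r
    using clique that by simp
  have "inj_on h {1..7}"
    unfolding points using distinct in_S \<open>z \<notin> S\<close> by (auto simp: inj_on_def h_def)
  moreover have "h ` {1..7} \<subseteq> V"
    unfolding points using in_S \<open>S \<subseteq> V\<close> \<open>z \<in> V\<close> by (auto simp: h_def)
  moreover have "\<forall>l\<in>fano_edges. h ` l \<in> E"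
    using triangle in_S distinct link by (auto simp: fano_edges_def h_def insert_commute)
  ultimately show ?thesis
    unfolding contains_fano_def by blast
qed

definition link_nonedges :: "'a set set \<Rightarrow> 'a set \<Rightarrow> 'a \<Rightarrow> 'a set set" where
  "link_nonedges E S z = {p. p \<subseteq> S \<and> card p = 2 \<and> insert z p \<notin> E}"

lemma card_link_nonedges_ge_5:
  assumes "S \<subseteq> V" "card S = 6" and clique: "\<And>t. t \<subseteq> S \<Longrightarrow> card t = 3 \<Longrightarrow> t \<in> E"
    and "z \<in> V" "z \<notin> S" and no_fano: "\<not> contains_fano V E"
  shows "5 \<le> card (link_nonedges E S z)"
proof (rule card_ge_5_if_meets_perfect_matchings)
  have "finite S" using \<open>card S = 6\<close> by (intro card_ge_0_finite) simp
  moreover have "link_nonedges E S z \<subseteq> Pow S" by (auto simp: link_nonedges_def)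
  ultimately show "finite (link_nonedges E S z)"
    by (meson finite_Pow_iff finite_subset)
  fix a1 a2 b1 b2 c1 c2
  assume distinct: "distinct [a1, a2, b1, b2, c1, c2]" and in_S: "{a1, a2, b1, b2, c1, c2} \<subseteq> S"
  have "\<not> (insert z {a1, a2} \<in> E \<and> insert z {b1, b2} \<in> E \<and> insert z {c1, c2} \<in> E)"
    using contains_fano_if_link_has_perfect_matching[OF \<open>S \<subseteq> V\<close> clique \<open>z \<in> V\<close> \<open>z \<notin> S\<close> distinct in_S]
      no_fano by blast
  moreover have "{a1, a2} \<subseteq> S" "{b1, b2} \<subseteq> S" "{c1, c2} \<subseteq> S"
    and "card {a1, a2} = 2" "card {b1, b2} = 2" "card {c1, c2} = 2"
    using distinct in_S by auto
  ultimately show "{a1, a2} \<in> link_nonedges E S z \<or> {b1, b2} \<in> link_nonedges E S z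
      \<or> {c1, c2} \<in> link_nonedges E S z"
    unfolding link_nonedges_def by blast
qed (fact \<open>card S = 6\<close>)

lemma card_insert_link_nonedges:
  assumes "z \<notin> S"
  shows "card (insert z ` link_nonedges E S z) = card (link_nonedges E S z)"
proof (rule card_image, rule inj_onI)
  fix p q
  assume "p \<in> link_nonedges E S z" "q \<in> link_nonedges E S z" "insert z p = insert z q"
  with \<open>z \<notin> S\<close> show "p = q"
    by (auto simp: link_nonedges_def)
qed

lemma insert_link_nonedges_subset_nonedges:
  assumes "S \<subseteq> V" "z \<in> V" "z \<notin> S"
  shows "insert z ` link_nonedges E S z \<subseteq> {t. t \<subseteq> V \<and> card t = 3} - E"
proof
  fix t
  assume "t \<in> insert z ` link_nonedges E S z"
  then obtain p where "t = insert z p" "p \<subseteq> S" "card p = 2" "insert z p \<notin> E"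
    by (auto simp: link_nonedges_def)
  moreover have "finite p" using \<open>card p = 2\<close> by (intro card_ge_0_finite) simp
  moreover have "z \<notin> p" using \<open>p \<subseteq> S\<close> \<open>z \<notin> S\<close> by blast
  ultimately show "t \<in> {t. t \<subseteq> V \<and> card t = 3} - E"
    using assms by auto
qed

lemma card_edges_add_nonedges_le:
  assumes "finite V" "uniform3 V E" "A \<subseteq> {t. t \<subseteq> V \<and> card t = 3} - E"
  shows "card E + card A \<le> card V choose 3"
proof -
  let ?T = "{t. t \<subseteq> V \<and> card t = 3}"
  have "finite ?T" using \<open>finite V\<close> by simp
  moreover have "E \<subseteq> ?T" using \<open>uniform3 V E\<close> by (auto simp: uniform3_def)
  ultimately have "card E + card A = card (E \<union> A)"
    using assms(3) by (intro card_Un_disjoint[symmetric]) (auto intro: finite_subset)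
  also have "\<dots> \<le> card ?T"
    using \<open>finite ?T\<close> \<open>E \<subseteq> ?T\<close> assms(3) by (intro card_mono) auto
  also have "\<dots> = card V choose 3"
    using \<open>finite V\<close> by (rule n_subsets)
  finally show ?thesis .
qed

theorem fact2p4:
  fixes V :: "'a set" and E :: "'a set set"
  assumes "finite V" and "card V = 8" and "uniform3 V E"
    and "\<not> contains_fano V E"
    and "contains_K6_3 V E"
  shows "card E \<le> 46 \<and> 46 < b 8 \<and> b 8 = 48"
proof -
  obtain S where S: "S \<subseteq> V" "card S = 6" and clique: "\<And>t. t \<subseteq> S \<Longrightarrow> card t = 3 \<Longrightarrow> t \<in> E"
    using assms(5) unfolding contains_K6_3_def by blast
  have "card (V - S) = 2"
    using S \<open>card V = 8\<close> \<open>finite V\<close> by (simp add: card_Diff_subset finite_subset)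
  then obtain x y where xy: "V - S = {x, y}" "x \<noteq> y" by (auto simp: card_2_iff)
  define N where "N z = insert z ` link_nonedges E S z" for z
  have N_nonedges: "N z \<subseteq> {t. t \<subseteq> V \<and> card t = 3} - E" if "z \<in> {x, y}" for z
    unfolding N_def using that xy by (intro insert_link_nonedges_subset_nonedges[OF S(1)]) auto
  have card_N: "5 \<le> card (N z)" if "z \<in> {x, y}" for z
  proof -
    from that xy have "z \<in> V" "z \<notin> S" by auto
    then show ?thesis
      by (simp add: N_def card_insert_link_nonedges card_link_nonedges_ge_5[OF S clique _ _ assms(4)])
  qed
  have "finite (N z)" if "z \<in> {x, y}" for z
    using card_N[OF that] by (intro card_ge_0_finite) simp
  moreover have "N x \<inter> N y = {}"
    using xy by (auto simp: N_def link_nonedges_def)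
  ultimately have "card (N x \<union> N y) = card (N x) + card (N y)"
    by (simp add: card_Un_disjoint)
  moreover have "card E + card (N x \<union> N y) \<le> card V choose 3"
    using N_nonedges by (intro card_edges_add_nonedges_le[OF \<open>finite V\<close> \<open>uniform3 V E\<close>]) blast
  ultimately have "card E \<le> 46"
    using card_N[of x] card_N[of y] \<open>card V = 8\<close> by (simp add: numeral_eq_Suc)
  then show ?thesis by (simp add: b_def)
qed

end
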